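(* Let $p>1$, $\kappa\in\mathbb{R}$, $h>0$ and $\sigma<1$. Suppose $\eta:\mathbb{R}\to\mathbb{C}$ is a nontrivial finite energy solution (i.e. $\eta\in L^\infty(\mathbb{R})\cap\dot H^1(\mathbb{R})$) of $$(\kappa+ih\sigma)\eta-ih\Lambda_z\eta-\eta_{zz}-\delta|\eta|^{p-1}\eta=0,\qquad \Lambda_z=\tfrac12+z\partial_z.$$ Then $\sigma>0$ and $$0=(1-\sigma)\int_{-\infty}^{+\infty}|\eta_z|^2\,dz-\Big(\frac12-\sigma\Big)|\eta(0)|^{p+1}.$$ Consequently, if $\sigma=\sigma_c:=\frac12-\frac1{p-1}$, then $E(\eta)=0$, where $E(\eta)=\frac12\int_{-\infty}^{+\infty}|\eta_z|^2\,dz-\frac1{p+1}|\eta(0)|^{p+1}$.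
   Context: $\delta$ is the Dirac delta at the origin. The equation means: $(\kappa+ih\sigma)\eta-ih(\frac12\eta+z\eta_z)-\eta_{zz}=0$ for $z\neq0$, $\eta$ is continuous at $z=0$ (i.e. $\eta(0-)=\eta(0+)=:\eta(0)$), and $\eta_z(0+)-\eta_z(0-)=-|\eta(0)|^{p-1}\eta(0)$, where $f(0\pm)$ denote one-sided limits. *)

theory Defs
  imports "HOL-Analysis.Analysis"
begin

definition energy :: "real \<Rightarrow> (real \<Rightarrow> complex) \<Rightarrow> (real \<Rightarrow> complex) \<Rightarrow> real" where
  "energy p eta eta' = (1/2) * integral UNIV (\<lambda>z. (cmod (eta' z))^2)
      - (1 / (p + 1)) * cmod (eta 0) powr (p + 1)"

text \<open>Finite energy solution of
  (kappa + i h sigma) eta - i h (eta/2 + z eta_z) - eta_zz - delta |eta|^(p-1) eta = 0,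
  in the sense: the ODE holds classically for z \<noteq> 0, eta is continuous at 0,
  and eta_z(0+) - eta_z(0-) = -|eta(0)|^(p-1) eta(0); finite energy means eta bounded
  and eta_z square integrable.\<close>
definition finite_energy_solution ::
  "real \<Rightarrow> real \<Rightarrow> real \<Rightarrow> real \<Rightarrow> (real \<Rightarrow> complex) \<Rightarrow> (real \<Rightarrow> complex) \<Rightarrow> (real \<Rightarrow> complex) \<Rightarrow> bool" where
  "finite_energy_solution p \<kappa> h \<sigma> eta eta' eta'' \<longleftrightarrow>
     (\<forall>z. z \<noteq> 0 \<longrightarrow>
        (eta has_vector_derivative eta' z) (at z) \<and>
        (eta' has_vector_derivative eta'' z) (at z) \<and>
        (complex_of_real \<kappa> + \<i> * complex_of_real (h * \<sigma>)) * eta z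
          - \<i> * complex_of_real h * (eta z / 2 + complex_of_real z * eta' z)
          - eta'' z = 0) \<and>
     isCont eta 0 \<and>
     (\<exists>a b. (eta' \<longlongrightarrow> a) (at_right 0) \<and> (eta' \<longlongrightarrow> b) (at_left 0) \<and>
            a - b = - (complex_of_real (cmod (eta 0) powr (p - 1)) * eta 0)) \<and>
     (\<exists>M. \<forall>z. cmod (eta z) \<le> M) \<and>
     (\<lambda>z. (cmod (eta' z))^2) integrable_on UNIV"

end

theory Submission
  imports Defs
begin

text \<open>Away from the origin the equation closes into a linear first-order system for the
  quadratic quantities \<open>dens = |\<eta>|\<^sup>2\<close>, \<open>kin = |\<eta>\<^sub>z|\<^sup>2\<close> and \<open>flux = \<eta>\<^sub>z cnj \<eta>\<close>.
  The Pohozaev function \<open>(\<sigma> - 1/2) Re flux - z kin / 2 - (\<kappa>/h) Im flux\<close> has derivative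
  \<open>-(1 - \<sigma>) kin\<close> and, by the jump condition, jumps by \<open>(1/2 - \<sigma>) |\<eta>(0)|\<^bsup>p+1\<^esup>\<close> at \<open>0\<close>.
  Integrating over \<open>[-R, R]\<close> along radii with \<open>R (kin R + kin (-R)) \<rightarrow> 0\<close>, which exist
  because \<open>kin\<close> is integrable, gives the identity.

  If \<open>\<sigma> \<le> 0\<close>, the current \<open>Im flux + (h/2) z dens\<close> has derivative \<open>h \<sigma> dens \<le> 0\<close> on
  both half-lines, is continuous across \<open>0\<close> and tends to \<open>0\<close> along those radii, hence vanishes.
  For \<open>\<sigma> < 0\<close> this forces \<open>dens = 0\<close>; for \<open>\<sigma> = 0\<close> it gives \<open>kin \<le> \<kappa> dens\<close>, so \<open>\<eta>\<close> has
  compact support, and Gronwall's inequality for \<open>dens\<close> shows \<open>\<eta> = 0\<close>.\<close>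

section \<open>Integrable functions on the line\<close>

lemma has_integral_one_sided_limits:
  fixes f f' :: "real \<Rightarrow> real"
  assumes "a < b"
    and der: "\<And>x. a < x \<Longrightarrow> x < b \<Longrightarrow> (f has_real_derivative f' x) (at x)"
    and la: "(f \<longlongrightarrow> La) (at_right a)" and lb: "(f \<longlongrightarrow> Lb) (at_left b)"
  shows "(f' has_integral (Lb - La)) {a..b}"
proof -
  define g where "g x = (if x \<le> a then La else if x \<ge> b then Lb else f x)" for x
  have eq: "g x = f x" if "a < x" "x < b" for x
    using that by (simp add: g_def)
  have derg: "(g has_real_derivative f' x) (at x)" if "a < x" "x < b" for x
    by (rule has_field_derivative_transform_within_open[OF der[OF that], of "{a<..<b}"])
       (use that eq in auto)
  have ra: "(g \<longlongrightarrow> La) (at_right a)"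
    by (rule Lim_transform_eventually[OF la],
        rule eventually_mono[OF eventually_at_right_real[OF \<open>a < b\<close>]]) (simp add: eq)
  have lb': "(g \<longlongrightarrow> Lb) (at_left b)"
    by (rule Lim_transform_eventually[OF lb],
        rule eventually_mono[OF eventually_at_left_real[OF \<open>a < b\<close>]]) (simp add: eq)
  have "continuous (at x within {a..b}) g" if x: "x \<in> {a..b}" for x
  proof -
    consider "x = a" | "x = b" | "a < x" "x < b"
      using x by fastforce
    then show ?thesis
    proof cases
      case 1
      then show ?thesis
        using ra \<open>a < b\<close> by (simp add: continuous_within at_within_Icc_at_right g_def)
    next
      case 2
      then show ?thesis
        using lb' \<open>a < b\<close> by (simp add: continuous_within at_within_Icc_at_left g_def)
    next
      case 3
      then show ?thesis
        using DERIV_isCont[OF derg[OF 3]] continuous_at_imp_continuous_within by blast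
    qed
  qed
  then have "continuous_on {a..b} g"
    by (simp add: continuous_on_eq_continuous_within)
  then have "(f' has_integral (g b - g a)) {a..b}"
    by (rule fundamental_theorem_of_calculus_interior[OF less_imp_le[OF \<open>a < b\<close>]])
       (use derg in \<open>auto simp: has_real_derivative_iff_has_vector_derivative\<close>)
  then show ?thesis
    using \<open>a < b\<close> by (simp add: g_def)
qed

lemma integral_symmetric_interval_tendsto:
  fixes q :: "real \<Rightarrow> real"
  assumes "(q has_integral A) UNIV"
  shows "((\<lambda>R. integral {-R..R} q) \<longlongrightarrow> A) at_top"
proof (rule tendstoI)
  fix e :: real
  assume "e > 0"
  with assms[unfolded has_integral_alt'] obtain B where "B > 0"
    and B: "\<And>a b. ball 0 B \<subseteq> cbox a b \<Longrightarrow> norm (integral (cbox a b) q - A) < e"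
    by auto
  show "\<forall>\<^sub>F R in at_top. dist (integral {-R..R} q) A < e"
    unfolding eventually_at_top_linorder
  proof (intro exI allI impI)
    fix R
    assume "R \<ge> B"
    then have "ball 0 B \<subseteq> cbox (-R) R"
      by (auto simp: dist_real_def)
    from B[OF this] show "dist (integral {-R..R} q) A < e"
      by (simp add: dist_real_def)
  qed
qed

text \<open>If \<open>R (q R + q (-R)) \<ge> \<delta>\<close> for all large \<open>R\<close>, then \<open>q\<close> would dominate \<open>\<delta>/R\<close>,
  whose integral diverges logarithmically.\<close>
lemma integrable_nonneg_small_boundary_term:
  fixes q :: "real \<Rightarrow> real"
  assumes int: "q integrable_on UNIV" and nonneg: "\<And>x. q x \<ge> 0" and "\<delta> > 0"
  shows "\<exists>R. R \<ge> T \<and> R \<ge> 1 \<and> R * (q R + q (-R)) < \<delta>"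
proof (rule ccontr)
  assume "\<nexists>R. R \<ge> T \<and> R \<ge> 1 \<and> R * (q R + q (-R)) < \<delta>"
  define T1 where "T1 = max T 1"
  have T1: "T1 \<ge> 1" "T1 \<ge> T"
    by (auto simp: T1_def)
  have low: "\<delta> / t \<le> q t + q (-t)" if "t \<ge> T1" for t
  proof -
    have "t \<ge> T" "t \<ge> 1"
      using that T1 by auto
    with \<open>\<nexists>R. _\<close> have "t * (q t + q (-t)) \<ge> \<delta>"
      by (meson not_less)
    then show ?thesis
      using that T1 by (simp add: divide_le_eq mult.commute)
  qed
  define Q where "Q = integral UNIV q"
  define X where "X = T1 * exp (2 * Q / \<delta> + 1)"
  have "Q \<ge> 0"
    unfolding Q_def using nonneg by (simp add: integral_nonneg int)
  then have "exp (2 * Q / \<delta> + 1) \<ge> 1"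
    using \<open>\<delta> > 0\<close> by simp
  then have X: "X \<ge> T1"
    unfolding X_def using T1 by (simp add: mult_le_cancel_left1)
  have "((\<lambda>t. \<delta> / t) has_integral (\<delta> * ln X - \<delta> * ln T1)) {T1..X}"
  proof (rule fundamental_theorem_of_calculus[OF X])
    fix t
    assume "t \<in> {T1..X}"
    then have "t > 0"
      using T1 by auto
    then show "((\<lambda>t. \<delta> * ln t) has_vector_derivative \<delta> / t) (at t within {T1..X})"
      by (auto intro!: derivative_eq_intros
          simp: has_real_derivative_iff_has_vector_derivative[symmetric])
  qed
  moreover have iq1: "q integrable_on {T1..X}" and iq2: "q integrable_on {-X..-T1}"
    by (rule integrable_on_subinterval[OF int], simp)+
  moreover have iq2': "(\<lambda>t. q (-t)) integrable_on {T1..X}"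
    using iq2 Henstock_Kurzweil_Integration.integrable_reflect_real[of q "-T1" "-X"] by simp
  ultimately have "\<delta> * ln X - \<delta> * ln T1 \<le> integral {T1..X} (\<lambda>t. q t + q (-t))"
    by (intro has_integral_le[OF _ integrable_integral]) (use low in \<open>auto intro: integrable_add\<close>)
  also have "\<dots> = integral {T1..X} q + integral {-X..-T1} q"
    using integral_add[OF iq1 iq2'] Henstock_Kurzweil_Integration.integral_reflect_real[of "-T1" "-X" q] by simp
  also have "\<dots> \<le> Q + Q"
    unfolding Q_def
    by (intro add_mono integral_subset_le) (use iq1 iq2 int nonneg in auto)
  finally have "\<delta> * ln X - \<delta> * ln T1 \<le> 2 * Q"
    by simp
  moreover have "\<delta> * ln X - \<delta> * ln T1 = 2 * Q + \<delta>"
    using T1 \<open>\<delta> > 0\<close> by (simp add: X_def ln_mult algebra_simps)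
  ultimately show False
    using \<open>\<delta> > 0\<close> by simp
qed

definition tail_radii :: "(real \<Rightarrow> real) \<Rightarrow> (nat \<Rightarrow> real) \<Rightarrow> bool" where
  "tail_radii q Rs \<longleftrightarrow> filterlim Rs at_top sequentially \<and> (\<forall>n. Rs n \<ge> 1)
     \<and> (\<lambda>n. Rs n * (q (Rs n) + q (- Rs n))) \<longlonglongrightarrow> 0"

lemma tail_radii_exists:
  fixes q :: "real \<Rightarrow> real"
  assumes "q integrable_on UNIV" and "\<And>x. q x \<ge> 0"
  obtains Rs where "tail_radii q Rs"
proof -
  have "\<exists>R. R \<ge> real n \<and> R \<ge> 1 \<and> R * (q R + q (-R)) < inverse (real (Suc n))" for n
    using integrable_nonneg_small_boundary_term[OF assms] by simp
  then obtain Rs where Rs_ge: "\<And>n. Rs n \<ge> real n" and "\<And>n. Rs n \<ge> 1"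
    and Rs_small: "\<And>n. Rs n * (q (Rs n) + q (-Rs n)) < inverse (real (Suc n))"
    by metis
  moreover have "filterlim Rs at_top sequentially"
    by (rule filterlim_at_top_mono[OF filterlim_real_sequentially]) (use Rs_ge in auto)
  moreover have "0 \<le> Rs n * (q (Rs n) + q (- Rs n))" for n
    using \<open>\<And>n. Rs n \<ge> 1\<close>[of n] assms(2) by (simp add: add_nonneg_nonneg)
  then have "(\<lambda>n. Rs n * (q (Rs n) + q (- Rs n))) \<longlonglongrightarrow> 0"
    by (intro tendsto_sandwich[OF _ _ tendsto_const LIMSEQ_inverse_real_of_nat] always_eventually
        allI less_imp_le[OF Rs_small])
  ultimately show thesis
    using that unfolding tail_radii_def by blast
qed

lemma tail_radii_weighted_tendsto_0:
  fixes q :: "real \<Rightarrow> real"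
  assumes "tail_radii q Rs" and nonneg: "\<And>x. q x \<ge> 0"
  shows "(\<lambda>n. Rs n * q (Rs n)) \<longlonglongrightarrow> 0" and "(\<lambda>n. Rs n * q (- Rs n)) \<longlonglongrightarrow> 0"
proof -
  have Rs: "\<And>n. Rs n \<ge> 1" and lim: "(\<lambda>n. Rs n * (q (Rs n) + q (- Rs n))) \<longlonglongrightarrow> 0"
    using assms(1) by (auto simp: tail_radii_def)
  have "0 \<le> Rs n * q (s * Rs n)" "Rs n * q (s * Rs n) \<le> Rs n * (q (Rs n) + q (- Rs n))"
    if "s = 1 \<or> s = -1" for n and s :: real
    using Rs[of n] nonneg[of "Rs n"] nonneg[of "- Rs n"] that by auto
  from this[of 1] this[of "-1"] show
    "(\<lambda>n. Rs n * q (Rs n)) \<longlonglongrightarrow> 0" "(\<lambda>n. Rs n * q (- Rs n)) \<longlonglongrightarrow> 0"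
    by (simp_all add: tendsto_sandwich[OF _ _ tendsto_const lim])
qed

lemma tail_radii_tendsto_0:
  fixes q :: "real \<Rightarrow> real"
  assumes "tail_radii q Rs" and nonneg: "\<And>x. q x \<ge> 0"
  shows "(\<lambda>n. q (Rs n)) \<longlonglongrightarrow> 0" and "(\<lambda>n. q (- Rs n)) \<longlonglongrightarrow> 0"
proof -
  have "q x \<le> Rs n * q x" for x n
    using assms(1) nonneg[of x] by (simp add: tail_radii_def mult_le_cancel_right1)
  with nonneg show "(\<lambda>n. q (Rs n)) \<longlonglongrightarrow> 0" "(\<lambda>n. q (- Rs n)) \<longlonglongrightarrow> 0"
    by (simp_all add: tendsto_sandwich[OF _ _ tendsto_const tail_radii_weighted_tendsto_0(1)[OF assms]]
        tendsto_sandwich[OF _ _ tendsto_const tail_radii_weighted_tendsto_0(2)[OF assms]])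
qed

section \<open>Monotonicity and Gronwall's inequality\<close>

lemma antitone_tail_nonneg:
  fixes f :: "real \<Rightarrow> real"
  assumes antitone: "\<And>x y. a < x \<Longrightarrow> x \<le> y \<Longrightarrow> f y \<le> f x"
    and "filterlim Rs at_top sequentially" and "e \<longlonglongrightarrow> 0" and "\<And>n. - e n \<le> f (Rs n)"
    and "a < z"
  shows "0 \<le> f z"
proof -
  have "\<forall>\<^sub>F n in sequentially. - e n \<le> f z"
    using filterlim_at_top_dense[THEN iffD1, OF assms(2), rule_format, of z]
    by eventually_elim (use assms(4,5) antitone in \<open>meson less_imp_le order_trans\<close>)
  then show ?thesis
    using tendsto_upperbound[OF tendsto_minus[OF \<open>e \<longlonglongrightarrow> 0\<close>]] by simp
qed

lemma antitone_left_tail_nonpos: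
  fixes f :: "real \<Rightarrow> real"
  assumes antitone: "\<And>x y. x \<le> y \<Longrightarrow> y < a \<Longrightarrow> f y \<le> f x"
    and "filterlim Rs at_top sequentially" and "e \<longlonglongrightarrow> 0" and "\<And>n. f (- Rs n) \<le> e n"
    and "z < a"
  shows "f z \<le> 0"
proof -
  have "0 \<le> - f (- (- z))"
  proof (rule antitone_tail_nonneg[of "-a" "\<lambda>t. - f (- t)", OF _ assms(2,3)])
    show "- f (- y) \<le> - f (- x)" if "- a < x" "x \<le> y" for x y
      using antitone[of "-y" "-x"] that by simp
  qed (use assms(4,5) in auto)
  then show ?thesis
    by simp
qed

text \<open>Gronwall: \<open>f exp(C t)\<close> is nondecreasing.\<close>
lemma zero_ahead_imp_nonpos:
  fixes f f' :: "real \<Rightarrow> real"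
  assumes "x \<le> y"
    and der: "\<And>t. x \<le> t \<Longrightarrow> t \<le> y \<Longrightarrow> (f has_real_derivative f' t) (at t) \<and> - C * f t \<le> f' t"
    and "f y = 0"
  shows "f x \<le> 0"
proof -
  have "f x * exp (C * x) \<le> f y * exp (C * y)"
  proof (rule DERIV_nonneg_imp_nondecreasing[OF \<open>x \<le> y\<close>])
    fix t
    assume "x \<le> t" "t \<le> y"
    with der have "((\<lambda>t. f t * exp (C * t)) has_real_derivative (f' t + C * f t) * exp (C * t)) (at t)"
      by (auto intro!: derivative_eq_intros simp: algebra_simps)
    moreover have "0 \<le> (f' t + C * f t) * exp (C * t)"
      using der[OF \<open>x \<le> t\<close> \<open>t \<le> y\<close>] by simp
    ultimately show "\<exists>d. ((\<lambda>t. f t * exp (C * t)) has_real_derivative d) (at t) \<and> 0 \<le> d"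
      by blast
  qed
  then show ?thesis
    using \<open>f y = 0\<close> by (simp add: mult_le_0_iff)
qed

lemma zero_behind_imp_nonpos:
  fixes f f' :: "real \<Rightarrow> real"
  assumes "x \<le> y"
    and der: "\<And>t. x \<le> t \<Longrightarrow> t \<le> y \<Longrightarrow> (f has_real_derivative f' t) (at t) \<and> f' t \<le> C * f t"
    and "f x = 0"
  shows "f y \<le> 0"
proof -
  have "f (- (- y)) \<le> 0"
  proof (rule zero_ahead_imp_nonpos[of "-y" "-x" "\<lambda>t. f (- t)" "\<lambda>t. - f' (- t)" C])
    fix t
    assume "- y \<le> t" "t \<le> - x"
    with der[of "-t"] show "((\<lambda>t. f (- t)) has_real_derivative - f' (- t)) (at t)
        \<and> - C * f (- t) \<le> - f' (- t)"
      by (simp add: DERIV_mirror[symmetric])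
  qed (use assms in auto)
  then show ?thesis
    by simp
qed

section \<open>Quadratic quantities of a finite energy solution\<close>

locale fe_solution =
  fixes p \<kappa> h \<sigma> :: real and eta eta' eta'' :: "real \<Rightarrow> complex"
  assumes h_pos: "h > 0"
    and solution: "finite_energy_solution p \<kappa> h \<sigma> eta eta' eta''"
begin

lemma has_vector_derivative_eta: "z \<noteq> 0 \<Longrightarrow> (eta has_vector_derivative eta' z) (at z)"
  and has_vector_derivative_eta': "z \<noteq> 0 \<Longrightarrow> (eta' has_vector_derivative eta'' z) (at z)"
  and eta''_eq: "z \<noteq> 0 \<Longrightarrow> eta'' z = (complex_of_real \<kappa> + \<i> * complex_of_real (h * \<sigma>)) * eta z
          - \<i> * complex_of_real h * (eta z / 2 + complex_of_real z * eta' z)"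
  using solution by (auto simp: finite_energy_solution_def)

lemma isCont_eta_0: "isCont eta 0"
  using solution by (simp add: finite_energy_solution_def)

definition dens :: "real \<Rightarrow> real" where
  "dens z = (cmod (eta z))\<^sup>2"

definition kin :: "real \<Rightarrow> real" where
  "kin z = (cmod (eta' z))\<^sup>2"

definition flux :: "real \<Rightarrow> complex" where
  "flux z = eta' z * cnj (eta z)"

lemma dens_nonneg: "dens z \<ge> 0"
  by (simp add: dens_def)

lemma kin_nonneg: "kin z \<ge> 0"
  by (simp add: kin_def)

lemma kin_integrable: "kin integrable_on UNIV"
  using solution by (simp add: finite_energy_solution_def kin_def[abs_def])

lemma norm_flux: "cmod (flux z) = cmod (eta' z) * cmod (eta z)"
  by (simp add: flux_def norm_mult)

lemma dens_eq_Re: "dens z = Re (eta z * cnj (eta z))"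
  by (simp add: dens_def complex_mult_cnj cmod_power2)

lemma kin_eq_Re: "kin z = Re (eta' z * cnj (eta' z))"
  by (simp add: kin_def complex_mult_cnj cmod_power2)

lemma has_real_derivative_dens:
  assumes "z \<noteq> 0"
  shows "(dens has_real_derivative 2 * Re (flux z)) (at z)"
proof -
  have "((\<lambda>z. Re (eta z * cnj (eta z))) has_real_derivative
      Re (eta z * cnj (eta' z) + eta' z * cnj (eta z))) (at z)"
    by (intro has_field_derivative_Re has_vector_derivative_mult has_vector_derivative_cnj
        has_vector_derivative_eta assms)
  then show ?thesis
    unfolding dens_eq_Re[abs_def] by (rule DERIV_cong) (simp add: flux_def)
qed

lemma has_real_derivative_kin:
  assumes "z \<noteq> 0"
  shows "(kin has_real_derivative 2 * \<kappa> * Re (flux z) + h * (2 * \<sigma> - 1) * Im (flux z)) (at z)"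
proof -
  have "((\<lambda>z. Re (eta' z * cnj (eta' z))) has_real_derivative
      Re (eta' z * cnj (eta'' z) + eta'' z * cnj (eta' z))) (at z)"
    by (intro has_field_derivative_Re has_vector_derivative_mult has_vector_derivative_cnj
        has_vector_derivative_eta' assms)
  then show ?thesis
    unfolding kin_eq_Re[abs_def]
    by (rule DERIV_cong) (simp add: flux_def eta''_eq[OF assms] field_simps)
qed

lemma has_real_derivative_Re_flux:
  assumes "z \<noteq> 0"
  shows "((\<lambda>z. Re (flux z)) has_real_derivative kin z + \<kappa> * dens z + h * z * Im (flux z)) (at z)"
proof -
  have "((\<lambda>z. Re (eta' z * cnj (eta z))) has_real_derivative
      Re (eta' z * cnj (eta' z) + eta'' z * cnj (eta z))) (at z)"
    by (intro has_field_derivative_Re has_vector_derivative_mult has_vector_derivative_cnj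
        has_vector_derivative_eta has_vector_derivative_eta' assms)
  then show ?thesis
    unfolding flux_def
    by (rule DERIV_cong) (simp add: kin_eq_Re dens_eq_Re eta''_eq[OF assms] algebra_simps)
qed

lemma has_real_derivative_Im_flux:
  assumes "z \<noteq> 0"
  shows "((\<lambda>z. Im (flux z)) has_real_derivative h * (\<sigma> - 1/2) * dens z - h * z * Re (flux z)) (at z)"
proof -
  have "((\<lambda>z. Im (eta' z * cnj (eta z))) has_real_derivative
      Im (eta' z * cnj (eta' z) + eta'' z * cnj (eta z))) (at z)"
    by (intro has_field_derivative_Im has_vector_derivative_mult has_vector_derivative_cnj
        has_vector_derivative_eta has_vector_derivative_eta' assms)
  then show ?thesis
    unfolding flux_def
    by (rule DERIV_cong) (simp add: dens_eq_Re eta''_eq[OF assms] algebra_simps)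
qed

definition pohozaev :: "real \<Rightarrow> real" where
  "pohozaev z = (\<sigma> - 1/2) * Re (flux z) - z * kin z / 2 - \<kappa> / h * Im (flux z)"

definition current :: "real \<Rightarrow> real" where
  "current z = Im (flux z) + h / 2 * z * dens z"

definition kin_minus_dens :: "real \<Rightarrow> real" where
  "kin_minus_dens z = kin z - \<kappa> * dens z"

lemma has_real_derivative_pohozaev:
  assumes "z \<noteq> 0"
  shows "(pohozaev has_real_derivative - (1 - \<sigma>) * kin z) (at z)"
  unfolding pohozaev_def[abs_def]
  by (rule DERIV_cong[OF DERIV_diff[OF DERIV_diff[OF
        DERIV_cmult[OF has_real_derivative_Re_flux[OF assms]]
        DERIV_cdivide[OF DERIV_mult[OF DERIV_ident has_real_derivative_kin[OF assms]]]]
        DERIV_cmult[OF has_real_derivative_Im_flux[OF assms]]]])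
     (use h_pos in \<open>simp add: field_simps\<close>)

lemma has_real_derivative_current:
  assumes "z \<noteq> 0"
  shows "(current has_real_derivative h * \<sigma> * dens z) (at z)"
  unfolding current_def[abs_def]
  by (rule DERIV_cong[OF DERIV_add[OF has_real_derivative_Im_flux[OF assms]
        DERIV_mult[OF DERIV_cmult[OF DERIV_ident] has_real_derivative_dens[OF assms]]]])
     (simp add: field_simps)

lemma has_real_derivative_kin_minus_dens:
  assumes "z \<noteq> 0"
  shows "(kin_minus_dens has_real_derivative h * (2 * \<sigma> - 1) * Im (flux z)) (at z)"
  unfolding kin_minus_dens_def[abs_def]
  by (rule DERIV_cong[OF DERIV_diff[OF has_real_derivative_kin[OF assms]
        DERIV_cmult[OF has_real_derivative_dens[OF assms]]]])
     (simp add: field_simps)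

section \<open>The Pohozaev identity\<close>

lemma eta'_jump:
  obtains a b where "(eta' \<longlongrightarrow> a) (at_right 0)" "(eta' \<longlongrightarrow> b) (at_left 0)"
    "(a - b) * cnj (eta 0) = - of_real (cmod (eta 0) powr (p + 1))"
proof -
  obtain a b where lim: "(eta' \<longlongrightarrow> a) (at_right 0)" "(eta' \<longlongrightarrow> b) (at_left 0)"
    and jump: "a - b = - (of_real (cmod (eta 0) powr (p - 1)) * eta 0)"
    using solution by (auto simp: finite_energy_solution_def)
  have pow: "cmod (eta 0) powr (p + 1) = cmod (eta 0) powr (p - 1) * (cmod (eta 0))\<^sup>2"
    using powr_add[of "cmod (eta 0)" "p - 1" 2] by (simp add: add.commute)
  have "(a - b) * cnj (eta 0)
      = - (of_real (cmod (eta 0) powr (p - 1)) * of_real ((cmod (eta 0))\<^sup>2))"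
    by (simp only: jump complex_norm_square mult.assoc mult_minus_left)
  also have "\<dots> = - of_real (cmod (eta 0) powr (p + 1))"
    by (simp only: of_real_mult pow)
  finally show thesis
    using that lim by blast
qed

lemma flux_jump:
  obtains wr wl where "(flux \<longlongrightarrow> wr) (at_right 0)" "(flux \<longlongrightarrow> wl) (at_left 0)"
    "wr - wl = - of_real (cmod (eta 0) powr (p + 1))"
proof -
  obtain a b where "(eta' \<longlongrightarrow> a) (at_right 0)" "(eta' \<longlongrightarrow> b) (at_left 0)"
    and jump: "(a - b) * cnj (eta 0) = - of_real (cmod (eta 0) powr (p + 1))"
    by (rule eta'_jump)
  moreover have "(eta \<longlongrightarrow> eta 0) (at_right 0)" "(eta \<longlongrightarrow> eta 0) (at_left 0)"
    using isCont_eta_0 by (simp_all add: isCont_def filterlim_at_split)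
  ultimately have "(flux \<longlongrightarrow> a * cnj (eta 0)) (at_right 0)" "(flux \<longlongrightarrow> b * cnj (eta 0)) (at_left 0)"
    unfolding flux_def[abs_def] by (auto intro!: tendsto_intros)
  with jump show thesis
    using that by (simp add: left_diff_distrib)
qed

lemma weighted_kin_tendsto_0: "((\<lambda>z. z * kin z) \<longlongrightarrow> 0) (at 0)"
proof -
  obtain a b where "(eta' \<longlongrightarrow> a) (at_right 0)" "(eta' \<longlongrightarrow> b) (at_left 0)"
    by (rule eta'_jump)
  moreover have "((\<lambda>z. z) \<longlongrightarrow> 0) (at_right 0)" "((\<lambda>z. z) \<longlongrightarrow> 0) (at_left 0)"
    by (simp_all add: tendsto_ident_at)
  moreover have "((\<lambda>z. z * kin z) \<longlongrightarrow> 0) F" if "(eta' \<longlongrightarrow> c) F" "((\<lambda>z. z) \<longlongrightarrow> 0) F"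
    for c F
    using tendsto_mult[OF that(2) tendsto_power[OF tendsto_norm[OF that(1)], of 2]]
    by (simp add: kin_def)
  ultimately have "((\<lambda>z. z * kin z) \<longlongrightarrow> 0) (at_right 0)" "((\<lambda>z. z * kin z) \<longlongrightarrow> 0) (at_left 0)"
    by blast+
  then show ?thesis
    by (simp add: filterlim_at_split)
qed

lemma pohozaev_integral:
  assumes "R > 0"
  shows "(1 - \<sigma>) * integral {-R..R} kin
    = pohozaev (-R) - pohozaev R + (1/2 - \<sigma>) * cmod (eta 0) powr (p + 1)"
proof -
  obtain wr wl where "(flux \<longlongrightarrow> wr) (at_right 0)" "(flux \<longlongrightarrow> wl) (at_left 0)"
    and jump: "wr - wl = - of_real (cmod (eta 0) powr (p + 1))"
    by (rule flux_jump)
  moreover have "((\<lambda>z. z * kin z) \<longlongrightarrow> 0) (at_right 0)" "((\<lambda>z. z * kin z) \<longlongrightarrow> 0) (at_left 0)"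
    using weighted_kin_tendsto_0 by (simp_all add: filterlim_at_split)
  moreover have "(pohozaev \<longlongrightarrow> (\<sigma> - 1/2) * Re w - 0 - \<kappa> / h * Im w) F"
    if "(flux \<longlongrightarrow> w) F" "((\<lambda>z. z * kin z) \<longlongrightarrow> 0) F" for w F
    unfolding pohozaev_def[abs_def]
    by (intro tendsto_diff tendsto_mult_left tendsto_Re tendsto_Im tendsto_divide_zero that)
  ultimately have lim0: "(pohozaev \<longlongrightarrow> (\<sigma> - 1/2) * Re wr - \<kappa> / h * Im wr) (at_right 0)"
    "(pohozaev \<longlongrightarrow> (\<sigma> - 1/2) * Re wl - \<kappa> / h * Im wl) (at_left 0)"
    by fastforce+
  have limR: "(pohozaev \<longlongrightarrow> pohozaev R) (at_left R)" "(pohozaev \<longlongrightarrow> pohozaev (-R)) (at_right (-R))"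
    using DERIV_isCont[OF has_real_derivative_pohozaev, of R] DERIV_isCont[OF has_real_derivative_pohozaev, of "-R"]
      assms by (simp_all add: isCont_def filterlim_at_split)
  have right: "((\<lambda>z. - (1 - \<sigma>) * kin z) has_integral
        (pohozaev R - ((\<sigma> - 1/2) * Re wr - \<kappa> / h * Im wr))) {0..R}"
    by (rule has_integral_one_sided_limits[OF assms has_real_derivative_pohozaev lim0(1) limR(1)])
       simp
  have left: "((\<lambda>z. - (1 - \<sigma>) * kin z) has_integral
        (((\<sigma> - 1/2) * Re wl - \<kappa> / h * Im wl) - pohozaev (-R))) {-R..0}"
    by (rule has_integral_one_sided_limits[OF _ has_real_derivative_pohozaev limR(2) lim0(2)])
       (use assms in auto)
  have "((\<lambda>z. - (1 - \<sigma>) * kin z) has_integral - (1 - \<sigma>) * integral {-R..R} kin) {-R..R}"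
    by (intro has_integral_mult_right integrable_integral integrable_on_subinterval[OF kin_integrable])
       simp
  from has_integral_unique[OF this has_integral_combine[OF _ _ left right]]
  have "- (1 - \<sigma>) * integral {-R..R} kin
      = ((\<sigma> - 1/2) * Re wl - \<kappa> / h * Im wl) - pohozaev (-R)
        + (pohozaev R - ((\<sigma> - 1/2) * Re wr - \<kappa> / h * Im wr))"
    using assms by simp
  moreover have "Re wl = Re wr + cmod (eta 0) powr (p + 1)" "Im wl = Im wr"
    using arg_cong[OF jump, of Re] arg_cong[OF jump, of Im] by simp_all
  ultimately show ?thesis
    by (simp add: algebra_simps)
qed

lemma tail_radii_flux_tendsto_0:
  assumes "tail_radii kin Rs"
  shows "(\<lambda>n. flux (Rs n)) \<longlonglongrightarrow> 0" and "(\<lambda>n. flux (- Rs n)) \<longlonglongrightarrow> 0"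
proof -
  obtain M where "\<And>z. cmod (eta z) \<le> M"
    using solution by (auto simp: finite_energy_solution_def)
  then have bound: "norm (flux z) \<le> M * sqrt (kin z)" for z
    by (simp add: norm_flux kin_def mult.commute mult_right_mono)
  have "(\<lambda>n. flux (s * Rs n)) \<longlonglongrightarrow> 0" if "(\<lambda>n. kin (s * Rs n)) \<longlonglongrightarrow> 0" for s
    using tendsto_mult_right_zero[OF tendsto_real_sqrt[OF that, unfolded real_sqrt_zero], of M]
    by (rule Lim_null_comparison[OF always_eventually[OF allI[OF bound]]])
  from this[of 1] this[of "-1"] show "(\<lambda>n. flux (Rs n)) \<longlonglongrightarrow> 0" "(\<lambda>n. flux (- Rs n)) \<longlonglongrightarrow> 0"
    using tail_radii_tendsto_0[OF assms kin_nonneg] by simp_all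
qed

lemma tail_radii_pohozaev_tendsto_0:
  assumes "tail_radii kin Rs"
  shows "(\<lambda>n. pohozaev (Rs n)) \<longlonglongrightarrow> 0" and "(\<lambda>n. pohozaev (- Rs n)) \<longlonglongrightarrow> 0"
proof -
  have "(\<lambda>n. pohozaev (s * Rs n)) \<longlonglongrightarrow> (\<sigma> - 1/2) * Re 0 - s * 0 / 2 - \<kappa> / h * Im 0"
    if "(\<lambda>n. flux (s * Rs n)) \<longlonglongrightarrow> 0" "(\<lambda>n. Rs n * kin (s * Rs n)) \<longlonglongrightarrow> 0" for s
    unfolding pohozaev_def mult.assoc using that by (intro tendsto_intros) auto
  from this[of 1] this[of "-1"] show
    "(\<lambda>n. pohozaev (Rs n)) \<longlonglongrightarrow> 0" "(\<lambda>n. pohozaev (- Rs n)) \<longlonglongrightarrow> 0"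
    using tail_radii_flux_tendsto_0[OF assms] tail_radii_weighted_tendsto_0[OF assms kin_nonneg]
    by simp_all
qed

theorem pohozaev_identity:
  "(1 - \<sigma>) * integral UNIV kin = (1/2 - \<sigma>) * cmod (eta 0) powr (p + 1)"
proof -
  obtain Rs where Rs: "tail_radii kin Rs"
    using tail_radii_exists[OF kin_integrable kin_nonneg] .
  then have "filterlim Rs at_top sequentially" "\<And>n. Rs n \<ge> 1"
    by (auto simp: tail_radii_def)
  then have "(\<lambda>n. (1 - \<sigma>) * integral {- Rs n..Rs n} kin) \<longlonglongrightarrow> (1 - \<sigma>) * integral UNIV kin"
    by (intro tendsto_mult_left filterlim_compose[OF integral_symmetric_interval_tendsto]
        integrable_integral kin_integrable)
  moreover have "(\<lambda>n. (1 - \<sigma>) * integral {- Rs n..Rs n} kin)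
      \<longlonglongrightarrow> 0 - 0 + (1/2 - \<sigma>) * cmod (eta 0) powr (p + 1)"
    unfolding pohozaev_integral[OF order.strict_trans2[OF zero_less_one \<open>\<And>n. Rs n \<ge> 1\<close>]]
    by (intro tendsto_intros tail_radii_pohozaev_tendsto_0[OF Rs])
  ultimately show ?thesis
    using LIMSEQ_unique by fastforce
qed

section \<open>Positivity of \<open>\<sigma>\<close>\<close>

lemma current_one_sided_limits:
  obtains L where "(current \<longlongrightarrow> L) (at_right 0)" "(current \<longlongrightarrow> L) (at_left 0)"
proof -
  obtain wr wl where wr: "(flux \<longlongrightarrow> wr) (at_right 0)" and wl: "(flux \<longlongrightarrow> wl) (at_left 0)"
    and jump: "wr - wl = - of_real (cmod (eta 0) powr (p + 1))"
    by (rule flux_jump)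
  have "((\<lambda>z. h / 2 * z * dens z) \<longlongrightarrow> h / 2 * 0 * dens 0) (at 0)"
    using isCont_eta_0 unfolding dens_def[abs_def] isCont_def by (intro tendsto_intros)
  then have r: "((\<lambda>z. h / 2 * z * dens z) \<longlongrightarrow> 0) (at_right 0)"
    and l: "((\<lambda>z. h / 2 * z * dens z) \<longlongrightarrow> 0) (at_left 0)"
    by (simp_all add: filterlim_at_split)
  have "(current \<longlongrightarrow> Im wr) (at_right 0)" "(current \<longlongrightarrow> Im wl) (at_left 0)"
    using tendsto_add[OF tendsto_Im[OF wr] r] tendsto_add[OF tendsto_Im[OF wl] l]
    by (simp_all add: current_def[abs_def])
  moreover have "Im wr = Im wl"
    using arg_cong[OF jump, of Im] by simp
  ultimately show thesis
    using that by simp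
qed

lemma current_vanishes:
  assumes "\<sigma> \<le> 0" and "z \<noteq> 0"
  shows "current z = 0"
proof -
  obtain L where L: "(current \<longlongrightarrow> L) (at_right 0)" "(current \<longlongrightarrow> L) (at_left 0)"
    by (rule current_one_sided_limits)
  obtain Rs where Rs: "tail_radii kin Rs"
    using tail_radii_exists[OF kin_integrable kin_nonneg] .
  have antitone: "current y \<le> current x" if "x \<le> y" "0 < x \<or> y < 0" for x y
  proof (rule DERIV_nonpos_imp_nonincreasing[OF \<open>x \<le> y\<close>])
    fix t
    assume "x \<le> t" "t \<le> y"
    with that have "(current has_real_derivative h * \<sigma> * dens t) (at t)"
      by (intro has_real_derivative_current) auto
    moreover have "h * \<sigma> * dens t \<le> 0"
      using assms(1) h_pos dens_nonneg[of t] by (simp add: mult_nonpos_nonneg mult_nonneg_nonpos)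
    ultimately show "\<exists>d. (current has_real_derivative d) (at t) \<and> d \<le> 0"
      by blast
  qed
  have lower: "- cmod (flux z) \<le> current z" and upper: "current (- z) \<le> cmod (flux (- z))"
    if "z \<ge> 0" for z
  proof -
    have "0 \<le> h / 2 * z * dens z" "0 \<le> h / 2 * z * dens (- z)"
      using that h_pos dens_nonneg by simp_all
    then show "- cmod (flux z) \<le> current z" "current (- z) \<le> cmod (flux (- z))"
      using abs_Im_le_cmod[of "flux z"] abs_Im_le_cmod[of "flux (- z)"] by (auto simp: current_def)
  qed
  have Rs_top: "filterlim Rs at_top sequentially" and "\<And>n. Rs n \<ge> 0"
    using Rs by (auto simp: tail_radii_def intro: order_trans[OF zero_le_one])
  have flux_lim: "(\<lambda>n. cmod (flux (Rs n))) \<longlonglongrightarrow> 0" "(\<lambda>n. cmod (flux (- Rs n))) \<longlonglongrightarrow> 0"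
    using tail_radii_flux_tendsto_0[OF Rs] by (simp_all add: tendsto_norm_zero)
  have right: "0 \<le> current t \<and> current t \<le> L" if "0 < t" for t
  proof
    show "0 \<le> current t"
      by (rule antitone_tail_nonneg[OF _ Rs_top flux_lim(1)]) (use antitone lower \<open>\<And>n. Rs n \<ge> 0\<close> that in auto)
    show "current t \<le> L"
      by (rule tendsto_lowerbound[OF L(1)])
         (use eventually_at_right_real[OF that] antitone in \<open>auto elim: eventually_mono\<close>)
  qed
  have left: "current t \<le> 0 \<and> L \<le> current t" if "t < 0" for t
  proof
    show "current t \<le> 0"
      by (rule antitone_left_tail_nonpos[OF _ Rs_top flux_lim(2)]) (use antitone upper \<open>\<And>n. Rs n \<ge> 0\<close> that in auto)
    show "L \<le> current t"
      by (rule tendsto_upperbound[OF L(2)])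
         (use eventually_at_left_real[OF that] antitone in \<open>auto elim: eventually_mono\<close>)
  qed
  from right[of 1] left[of "-1"] have "L = 0"
    by simp
  with right left assms(2) show ?thesis
    by (cases "z > 0") (auto intro: antisym)
qed

lemma dens_vanishes_if_sigma_neg:
  assumes "\<sigma> < 0" and "z \<noteq> 0"
  shows "dens z = 0"
proof -
  have "(current has_real_derivative 0) (at z)"
    by (rule has_field_derivative_transform_within_open[OF DERIV_const, where S="- {0}"])
       (use assms current_vanishes in auto)
  with has_real_derivative_current[OF assms(2)] have "h * \<sigma> * dens z = 0"
    by (rule DERIV_unique)
  with assms(1) h_pos show ?thesis
    by simp
qed

context
  assumes sigma_zero: "\<sigma> = 0"
begin

lemma Im_flux_eq: "z \<noteq> 0 \<Longrightarrow> Im (flux z) = - (h / 2 * z * dens z)"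
  using current_vanishes[of z] sigma_zero by (simp add: current_def eq_neg_iff_add_eq_0)

lemma dens_le_norm_flux:
  assumes "\<bar>z\<bar> \<ge> 1"
  shows "dens z \<le> 2 / h * cmod (flux z)"
proof -
  have "dens z \<le> \<bar>z\<bar> * dens z"
    using mult_right_mono[OF assms dens_nonneg[of z]] by simp
  then have "h / 2 * dens z \<le> h / 2 * \<bar>z\<bar> * dens z"
    using h_pos by (simp add: mult.assoc)
  also have "\<dots> = \<bar>Im (flux z)\<bar>"
    using assms h_pos dens_nonneg[of z] by (auto simp: Im_flux_eq abs_mult)
  also have "\<dots> \<le> cmod (flux z)"
    by (rule abs_Im_le_cmod)
  finally show ?thesis
    using h_pos by (simp add: field_simps)
qed

text \<open>\<open>kin_minus_dens\<close> now has derivative \<open>h\<^sup>2 z dens z / 2\<close>, so it increases away from the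
  origin on both sides, while it tends to \<open>0\<close> along the tail radii.\<close>
lemma kin_le_dens:
  assumes "z \<noteq> 0"
  shows "kin z \<le> \<kappa> * dens z"
proof -
  obtain Rs where Rs: "tail_radii kin Rs"
    using tail_radii_exists[OF kin_integrable kin_nonneg] .
  have Rs_top: "filterlim Rs at_top sequentially" and Rs_ge: "\<And>n. Rs n \<ge> 1"
    using Rs by (auto simp: tail_radii_def)
  have deriv: "(kin_minus_dens has_real_derivative h\<^sup>2 / 2 * t * dens t) (at t)" if "t \<noteq> 0" for t
    using has_real_derivative_kin_minus_dens[OF that]
    by (rule DERIV_cong) (simp add: sigma_zero Im_flux_eq that power2_eq_square)
  define e where "e s n = kin (s * Rs n) + \<bar>\<kappa>\<bar> * (2 / h * cmod (flux (s * Rs n)))" for s n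
  have bound: "kin_minus_dens (s * Rs n) \<le> e s n" if "\<bar>s\<bar> = 1" for s n
  proof -
    have "- \<kappa> * dens (s * Rs n) \<le> \<bar>\<kappa>\<bar> * dens (s * Rs n)"
      using mult_right_mono[OF _ dens_nonneg, of "- \<kappa>" "\<bar>\<kappa>\<bar>"] by simp
    also have "\<dots> \<le> \<bar>\<kappa>\<bar> * (2 / h * cmod (flux (s * Rs n)))"
      using Rs_ge[of n] that by (intro mult_left_mono dens_le_norm_flux) (auto simp: abs_mult)
    finally show ?thesis
      by (simp add: kin_minus_dens_def e_def)
  qed
  have "e s \<longlonglongrightarrow> 0" if "(\<lambda>n. kin (s * Rs n)) \<longlonglongrightarrow> 0" "(\<lambda>n. flux (s * Rs n)) \<longlonglongrightarrow> 0" for s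
    unfolding e_def using that by (intro tendsto_add_zero tendsto_mult_right_zero tendsto_norm_zero)
  from this[of 1] this[of "-1"] have e_lim: "e 1 \<longlonglongrightarrow> 0" "e (-1) \<longlonglongrightarrow> 0"
    using tail_radii_tendsto_0[OF Rs kin_nonneg] tail_radii_flux_tendsto_0[OF Rs] by simp_all
  have "kin_minus_dens z \<le> 0"
  proof (cases "z > 0")
    case True
    have "0 \<le> - kin_minus_dens z"
    proof (rule antitone_tail_nonneg[OF _ Rs_top e_lim(1) _ True])
      show "- kin_minus_dens y \<le> - kin_minus_dens x" if "0 < x" "x \<le> y" for x y
      proof (intro le_imp_neg_le DERIV_nonneg_imp_nondecreasing[OF \<open>x \<le> y\<close>])
        fix t
        assume "x \<le> t"
        with that have "t > 0"
          by simp
        then show "\<exists>d. (kin_minus_dens has_real_derivative d) (at t) \<and> 0 \<le> d"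
          using deriv dens_nonneg[of t] by (intro exI[of _ "h\<^sup>2 / 2 * t * dens t"]) simp
      qed
      show "- e 1 n \<le> - kin_minus_dens (Rs n)" for n
        using bound[of 1 n] by simp
    qed
    then show ?thesis
      by simp
  next
    case False
    with assms have "z < 0"
      by simp
    show ?thesis
    proof (rule antitone_left_tail_nonpos[OF _ Rs_top e_lim(2) _ \<open>z < 0\<close>])
      show "kin_minus_dens y \<le> kin_minus_dens x" if "x \<le> y" "y < 0" for x y
      proof (rule DERIV_nonpos_imp_nonincreasing[OF \<open>x \<le> y\<close>])
        fix t
        assume "t \<le> y"
        with that have "t < 0"
          by simp
        then show "\<exists>d. (kin_minus_dens has_real_derivative d) (at t) \<and> d \<le> 0"
          using deriv dens_nonneg[of t]
          by (intro exI[of _ "h\<^sup>2 / 2 * t * dens t"]) (simp add: mult_nonpos_nonneg mult_nonneg_nonpos)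
      qed
      show "kin_minus_dens (- Rs n) \<le> e (-1) n" for n
        using bound[of "-1" n] by simp
    qed
  qed
  then show ?thesis
    by (simp add: kin_minus_dens_def)
qed

lemma norm_flux_sq_le:
  assumes "z \<noteq> 0"
  shows "(cmod (flux z))\<^sup>2 \<le> \<kappa> * (dens z)\<^sup>2"
proof -
  have "(cmod (flux z))\<^sup>2 = kin z * dens z"
    by (simp add: norm_flux kin_def dens_def power_mult_distrib)
  also have "\<dots> \<le> \<kappa> * dens z * dens z"
    by (rule mult_right_mono[OF kin_le_dens[OF assms] dens_nonneg])
  finally show ?thesis
    by (simp add: power2_eq_square mult.assoc)
qed

lemma dens_vanishes_far:
  assumes "z \<noteq> 0" and "\<kappa> < (h / 2 * z)\<^sup>2"
  shows "dens z = 0"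
proof (rule ccontr)
  assume "dens z \<noteq> 0"
  have "(h / 2 * z)\<^sup>2 * (dens z)\<^sup>2 = (Im (flux z))\<^sup>2"
    by (simp only: Im_flux_eq[OF assms(1)] power2_minus power_mult_distrib)
  also have "\<dots> \<le> (cmod (flux z))\<^sup>2"
    using power_mono[OF abs_Im_le_cmod[of "flux z"] abs_ge_zero, of 2] by simp
  also have "\<dots> \<le> \<kappa> * (dens z)\<^sup>2"
    by (rule norm_flux_sq_le[OF assms(1)])
  finally have "(h / 2 * z)\<^sup>2 * (dens z)\<^sup>2 \<le> \<kappa> * (dens z)\<^sup>2" .
  moreover have "0 < (dens z)\<^sup>2"
    using \<open>dens z \<noteq> 0\<close> by simp
  ultimately have "(h / 2 * z)\<^sup>2 \<le> \<kappa>"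
    by (rule mult_right_le_imp_le)
  with assms(2) show False
    by simp
qed

lemma abs_Re_flux_le:
  assumes "z \<noteq> 0"
  shows "\<bar>Re (flux z)\<bar> \<le> sqrt \<bar>\<kappa>\<bar> * dens z"
proof -
  have "(Re (flux z))\<^sup>2 \<le> (cmod (flux z))\<^sup>2"
    using power_mono[OF abs_Re_le_cmod[of "flux z"] abs_ge_zero, of 2] by simp
  also have "\<dots> \<le> \<bar>\<kappa>\<bar> * (dens z)\<^sup>2"
    using norm_flux_sq_le[OF assms] mult_right_mono[OF abs_ge_self zero_le_power2, of \<kappa> "dens z"]
    by (rule order_trans)
  also have "\<dots> = (sqrt \<bar>\<kappa>\<bar> * dens z)\<^sup>2"
    by (simp add: power_mult_distrib)
  finally have "\<bar>Re (flux z)\<bar> \<le> \<bar>sqrt \<bar>\<kappa>\<bar> * dens z\<bar>"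
    by (simp only: abs_le_square_iff)
  then show ?thesis
    using dens_nonneg[of z] by simp
qed

text \<open>By the previous two lemmas, \<open>dens\<close> vanishes far out and \<open>\<bar>dens'\<bar> \<le> 2 \<surd>\<bar>\<kappa>\<bar> dens\<close>,
  so Gronwall's inequality propagates the zero back to every \<open>z \<noteq> 0\<close>.\<close>
lemma dens_vanishes_if_sigma_zero:
  assumes "z \<noteq> 0"
  shows "dens z = 0"
proof -
  define C where "C = 2 * sqrt \<bar>\<kappa>\<bar>"
  define B where "B = C / h + 1"
  have B: "B > 0" "h / 2 * B > sqrt \<bar>\<kappa>\<bar>"
    using h_pos by (auto simp: B_def C_def field_simps add_pos_nonneg)
  have far: "dens t = 0" if "\<bar>t\<bar> \<ge> B" for t
  proof (rule dens_vanishes_far)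
    show "t \<noteq> 0"
      using that B by auto
    have "h / 2 * B \<le> h / 2 * \<bar>t\<bar>"
      using that h_pos by (intro mult_left_mono) auto
    with B(2) have "sqrt \<bar>\<kappa>\<bar> < h / 2 * \<bar>t\<bar>"
      by linarith
    then have "(sqrt \<bar>\<kappa>\<bar>)\<^sup>2 < (h / 2 * \<bar>t\<bar>)\<^sup>2"
      by (rule power_strict_mono) auto
    moreover have "(h / 2 * \<bar>t\<bar>)\<^sup>2 = (h / 2 * t)\<^sup>2"
      by (simp only: power_mult_distrib power2_abs)
    ultimately show "\<kappa> < (h / 2 * t)\<^sup>2"
      by simp
  qed
  have deriv: "(dens has_real_derivative 2 * Re (flux t)) (at t) \<and> \<bar>2 * Re (flux t)\<bar> \<le> C * dens t"
    if "t \<noteq> 0" for t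
    using has_real_derivative_dens[OF that] abs_Re_flux_le[OF that] by (simp add: C_def)
  show ?thesis
  proof (cases "z > 0")
    case True
    have "dens z \<le> 0"
    proof (rule zero_ahead_imp_nonpos[of z "z + B" dens "\<lambda>t. 2 * Re (flux t)" C])
      fix t
      assume "z \<le> t"
      with True have "t \<noteq> 0"
        by simp
      from deriv[OF this] show
        "(dens has_real_derivative 2 * Re (flux t)) (at t) \<and> - C * dens t \<le> 2 * Re (flux t)"
        by (simp add: abs_le_iff)
    next
      show "dens (z + B) = 0"
        using far True B by simp
    qed (use B in simp)
    then show ?thesis
      using dens_nonneg[of z] by simp
  next
    case False
    with assms have "z < 0"
      by simp
    have "dens z \<le> 0"
    proof (rule zero_behind_imp_nonpos[of "z - B" z dens "\<lambda>t. 2 * Re (flux t)" C])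
      fix t
      assume "t \<le> z"
      with \<open>z < 0\<close> have "t \<noteq> 0"
        by simp
      from deriv[OF this] show
        "(dens has_real_derivative 2 * Re (flux t)) (at t) \<and> 2 * Re (flux t) \<le> C * dens t"
        by (simp add: abs_le_iff)
    next
      show "dens (z - B) = 0"
        using far \<open>z < 0\<close> B by simp
    qed (use B in simp)
    then show ?thesis
      using dens_nonneg[of z] by simp
  qed
qed

end

lemma sigma_pos:
  assumes "\<exists>z. eta z \<noteq> 0"
  shows "\<sigma> > 0"
proof (rule ccontr)
  assume "\<not> \<sigma> > 0"
  then have sigma: "\<sigma> < 0 \<or> \<sigma> = 0"
    by linarith
  have eta_eq: "eta z = 0" if "z \<noteq> 0" for z
  proof -
    from sigma have "dens z = 0"
      using dens_vanishes_if_sigma_neg[OF _ that] dens_vanishes_if_sigma_zero[OF _ that] by (elim disjE)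
    then show ?thesis
      by (simp add: dens_def)
  qed
  have "(eta \<longlongrightarrow> 0) (at 0)"
    by (rule tendsto_eventually, rule eventually_mono[OF eventually_neq_at_within[of 0]], rule eta_eq)
  with isCont_eta_0 have "eta 0 = 0"
    unfolding isCont_def by (rule LIM_unique)
  with eta_eq have "eta z = 0" for z
    by (cases "z = 0") simp_all
  with assms show False
    by simp
qed

end

theorem theorem1p2:
  fixes p \<kappa> h \<sigma> :: real and eta eta' eta'' :: "real \<Rightarrow> complex"
  assumes "p > 1" and "h > 0" and "\<sigma> < 1"
    and "finite_energy_solution p \<kappa> h \<sigma> eta eta' eta''"
    and "\<exists>z. eta z \<noteq> 0"
  shows "\<sigma> > 0
    \<and> 0 = (1 - \<sigma>) * integral UNIV (\<lambda>z. (cmod (eta' z))^2)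
          - (1/2 - \<sigma>) * cmod (eta 0) powr (p + 1)
    \<and> (\<sigma> = 1/2 - 1/(p - 1) \<longrightarrow> energy p eta eta' = 0)"
proof -
  interpret fe_solution p \<kappa> h \<sigma> eta eta' eta''
    using assms(2,4) by unfold_locales
  define A where "A = integral UNIV (\<lambda>z. (cmod (eta' z))^2)"
  define c where "c = cmod (eta 0) powr (p + 1)"
  have identity: "(1 - \<sigma>) * A = (1/2 - \<sigma>) * c"
    using pohozaev_identity by (simp add: A_def c_def kin_def[abs_def])
  have "energy p eta eta' = 0" if "\<sigma> = 1/2 - 1/(p - 1)"
  proof -
    from identity that have "(p + 1) * A = 2 * c"
      using assms(1) by (simp add: field_simps)
    then show ?thesis
      unfolding energy_def A_def[symmetric] c_def[symmetric] using assms(1) by (simp add: field_simps)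
  qed
  with sigma_pos[OF assms(5)] identity show ?thesis
    by (simp add: A_def c_def)
qed

end
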